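(* Let $q$ be a prime power with $q\equiv2\pmod 3$, let $m,n$ be positive integers, let $\omega\in\mathbb{F}_{q^2}$ be an element of multiplicative order $3$, and let $\varepsilon\in\mathbb{F}_q^*\cup\{\pm\omega,\pm\omega^2\}$. Put $f(x)=(x+x^q)^m+\varepsilon(x+\omega x^q)^n$. Then: (i) if $\varepsilon\in\mathbb{F}_q^*$, $f$ permutes $\mathbb{F}_{q^2}$ if and only if $\gcd(mn,q-1)=1$ and $3\nmid n$; (ii) if $\varepsilon=\pm\omega$, $f$ permutes $\mathbb{F}_{q^2}$ if and only if $\gcd(mn,q-1)=1$ and $n\not\equiv1\pmod3$; (iii) if $\varepsilon=\pm\omega^2$, $f$ permutes $\mathbb{F}_{q^2}$ if and only if $\gcd(mn,q-1)=1$ and $n\not\equiv2\pmod3$.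
   Context: $f$ permutes $\mathbb{F}_{q^2}$ means the map $x\mapsto f(x)$ on $\mathbb{F}_{q^2}$ is bijective. *)

theory Defs
  imports "HOL-Computational_Algebra.Primes"
begin

definition subfield_Fq :: "nat \<Rightarrow> 'a::field set" where
  "subfield_Fq q = {x. x ^ q = x}"

end

theory Submission
  imports Defs "HOL-Number_Theory.Residues" "HOL-Computational_Algebra.Polynomial"
begin

text \<open>
  Write \<open>F\<close> for the fixed field of \<open>x \<mapsto> x ^ q\<close> and \<open>Tr x = x + x ^ q\<close>. Since
  \<open>\<omega> ^ q = \<omega> ^ 2 \<noteq> \<omega>\<close>, the map \<open>x \<mapsto> (Tr x, Tr (\<omega> x))\<close> is a bijection from the whole
  field onto \<open>F \<times> F\<close>, and \<open>x + \<omega> x ^ q = \<omega> ^ 2 Tr (\<omega> x)\<close>. So \<open>f\<close> permutes the field iff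
  \<open>(s, t) \<mapsto> s ^ m + c t ^ n\<close> maps \<open>F \<times> F\<close> bijectively onto it, where \<open>c = \<epsilon> \<omega> ^ (2 n)\<close>.
  That happens iff both power maps permute \<open>F\<close>, i.e. \<open>gcd (m n) (q - 1) = 1\<close>, and
  \<open>c \<notin> F\<close>: applying the Frobenius to \<open>s ^ m + c t ^ n\<close> then separates the two summands.
  Finally \<open>\<omega> ^ j \<in> F\<close> iff \<open>3 dvd j\<close>, which turns \<open>c \<notin> F\<close> into the three congruences.
\<close>

text \<open>The library's \<open>finite_field_power_card_eq_same\<close> needs the sort \<open>finite_field\<close>, which
  a type variable of sort \<open>{field,finite}\<close> is not known to have.\<close>

lemma power_card_UNIV_eq_self:
  fixes x :: "'a::{field,finite}"
  shows "x ^ card (UNIV :: 'a set) = x"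
proof (cases "x = 0")
  case True
  then show ?thesis
    using finite_UNIV_card_ge_0[where 'a='a] by simp
next
  case False
  define N where "N = (UNIV - {0} :: 'a set)"
  have "bij_betw ((*) x) N N"
    using False by (intro bij_betwI[of _ _ _ "\<lambda>y. y / x"]) (auto simp: N_def)
  then have "(\<Prod>y\<in>N. x * y) = \<Prod>N"
    by (rule prod.reindex_bij_betw)
  moreover have "(\<Prod>y\<in>N. x * y) = x ^ card N * \<Prod>N"
    by (simp add: prod.distrib)
  moreover have "\<Prod>N \<noteq> 0"
    by (simp add: N_def)
  ultimately have "x ^ card N = 1"
    by simp
  moreover have "card (UNIV :: 'a set) = Suc (card N)"
    using finite_UNIV_card_ge_0[where 'a='a] by (simp add: N_def card_Diff_singleton)
  ultimately show ?thesis
    by simp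
qed

lemma CHAR_eq_if_card_prime_power:
  assumes "prime p" and "card (UNIV :: 'a::{field,finite} set) = p ^ j"
  shows "CHAR('a) = p"
proof -
  have "prime CHAR('a)"
    by (simp add: finite_imp_CHAR_pos prime_CHAR_semidom)
  moreover have "CHAR('a) dvd p ^ j"
    using CHAR_dvd_CARD[where 'a='a] assms(2) by simp
  ultimately show ?thesis
    using assms(1) prime_dvd_power primes_dvd_imp_eq by blast
qed

lemma prime_power_ge_2: "prime p \<Longrightarrow> k > 0 \<Longrightarrow> p ^ k \<ge> (2::nat)"
  using prime_ge_2_nat[of p] self_le_power[of p k] by simp

lemma quadratic_field_frobenius:
  fixes x y :: "'a::{field,finite}"
  assumes "prime p" and "q = p ^ k" and "card (UNIV :: 'a set) = q ^ 2"
  shows "(x + y) ^ q = x ^ q + y ^ q" and "(x ^ q) ^ q = x"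
proof -
  have "card (UNIV :: 'a set) = p ^ (2 * k)"
    using assms(2,3) by (simp add: power_mult mult.commute)
  then have "CHAR('a) = p"
    by (rule CHAR_eq_if_card_prime_power[OF assms(1)])
  then show "(x + y) ^ q = x ^ q + y ^ q"
    using assms(1,2) by (intro freshmans_dream') simp_all
  show "(x ^ q) ^ q = x"
    using power_card_UNIV_eq_self[of x] assms(3) by (simp flip: power_mult add: power2_eq_square)
qed

lemma roots_of_unity_finite_card_le:
  assumes "n > 0"
  shows "finite {x::'a::idom. x ^ n = 1}" and "card {x::'a::idom. x ^ n = 1} \<le> n"
proof -
  define P :: "'a poly" where "P = [:-1:] + monom 1 n"
  have "degree P = n"
    using assms unfolding P_def by (subst degree_add_eq_right) (auto simp: degree_monom_eq)
  then have "P \<noteq> 0"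
    using assms by auto
  moreover have roots: "{x. x ^ n = 1} = {x. poly P x = 0}"
    by (simp add: P_def poly_monom)
  ultimately show "finite {x::'a. x ^ n = 1}" and "card {x::'a. x ^ n = 1} \<le> n"
    using poly_roots_finite[of P] card_poly_roots_bound[of P] \<open>degree P = n\<close> by (simp_all add: roots)
qed

lemma subfield_Fq_iff [simp]: "x \<in> subfield_Fq q \<longleftrightarrow> x ^ q = x"
  by (simp add: subfield_Fq_def)

lemma mult_in_subfield_Fq: "x \<in> subfield_Fq q \<Longrightarrow> y \<in> subfield_Fq q \<Longrightarrow> x * y \<in> subfield_Fq q"
  by (simp add: power_mult_distrib)

lemma power_in_subfield_Fq: "x \<in> subfield_Fq q \<Longrightarrow> x ^ j \<in> subfield_Fq q"
  by (metis subfield_Fq_iff power_mult mult.commute)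

lemma mult_in_subfield_Fq_iff:
  assumes "c \<in> subfield_Fq q" and "c \<noteq> 0"
  shows "c * x \<in> subfield_Fq q \<longleftrightarrow> x \<in> subfield_Fq q"
  using assms by (simp add: power_mult_distrib)

lemma add_in_subfield_Fq:
  fixes x y :: "'a::field"
  assumes "\<And>a b::'a. (a + b) ^ q = a ^ q + b ^ q"
    and "x \<in> subfield_Fq q" and "y \<in> subfield_Fq q"
  shows "x + y \<in> subfield_Fq q"
  using assms by simp

lemma power_uminus_if_power_add:
  fixes x :: "'a::field"
  assumes "\<And>a b::'a. (a + b) ^ q = a ^ q + b ^ q" and "q > 0"
  shows "(- x) ^ q = - (x ^ q)"
proof -
  have "x ^ q + (- x) ^ q = 0"
    using assms(1)[of x "- x"] assms(2) by (simp add: zero_power)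
  then show ?thesis
    by (simp add: eq_neg_iff_add_eq_0 add.commute)
qed

lemma uminus_in_subfield_Fq_iff:
  fixes x :: "'a::field"
  assumes "\<And>a b::'a. (a + b) ^ q = a ^ q + b ^ q" and "q > 0"
  shows "- x \<in> subfield_Fq q \<longleftrightarrow> x \<in> subfield_Fq q"
  using power_uminus_if_power_add[OF assms] by auto

lemma trace_in_subfield_Fq:
  fixes x :: "'a::field"
  assumes "\<And>a b::'a. (a + b) ^ q = a ^ q + b ^ q" and "\<And>a::'a. (a ^ q) ^ q = a"
  shows "x + x ^ q \<in> subfield_Fq q"
  by (simp add: assms add.commute)

lemma card_subfield_Fq_le:
  assumes "q \<ge> 2"
  shows "card (subfield_Fq q :: 'a::field set) \<le> q"
proof -
  have "subfield_Fq q \<subseteq> insert (0::'a) {x. x ^ (q - 1) = 1}"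
  proof
    fix x :: 'a
    assume "x \<in> subfield_Fq q"
    then have "x * x ^ (q - 1) = x * 1"
      using assms by (simp flip: power_Suc)
    then show "x \<in> insert 0 {x. x ^ (q - 1) = 1}"
      by auto
  qed
  then have "card (subfield_Fq q :: 'a set) \<le> card (insert (0::'a) {x. x ^ (q - 1) = 1})"
    using assms roots_of_unity_finite_card_le(1)[of "q - 1"] by (intro card_mono) auto
  also have "\<dots> \<le> Suc (q - 1)"
    using assms roots_of_unity_finite_card_le[of "q - 1", where 'a='a]
    by (auto simp: card_insert_if)
  finally show ?thesis
    using assms by simp
qed

lemma inj_on_power_if_coprime:
  fixes S :: "'a::idom set"
  assumes unit: "\<And>t. t \<in> S \<Longrightarrow> t \<noteq> 0 \<Longrightarrow> t ^ r = 1"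
    and "coprime e r" and "e > 0"
  shows "inj_on (\<lambda>t. t ^ e) S"
proof -
  have "gcd e r = 1"
    using assms(2) by (simp add: coprime_iff_gcd_eq_1)
  then obtain u v where uv: "e * u = r * v + 1"
    using bezout_nat[of e r] \<open>e > 0\<close> by (metis not_gr0)
  have "(t ^ e) ^ u = t" if "t \<in> S" for t
  proof -
    have "(t ^ e) ^ u = t ^ (r * v + 1)"
      by (simp add: uv flip: power_mult)
    also have "\<dots> = (t ^ r) ^ v * t"
      by (simp add: power_mult)
    finally show ?thesis
      using unit[OF that] by (cases "t = 0") simp_all
  qed
  then show ?thesis
    by (rule inj_on_inverseI)
qed

lemma coprime_if_inj_on_power:
  fixes S :: "'a::idom set"
  assumes unit: "\<And>t. t \<in> S \<Longrightarrow> t \<noteq> 0 \<Longrightarrow> t ^ r = 1"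
    and card: "card (S - {0}) = r" and "r > 0"
    and inj: "inj_on (\<lambda>t. t ^ e) S"
  shows "coprime e r"
proof -
  define d where "d = gcd e r"
  obtain k where k: "r = d * k"
    unfolding d_def by (metis gcd_dvd2 dvdE)
  obtain e' where e': "e = d * e'"
    unfolding d_def by (metis gcd_dvd1 dvdE)
  have "k > 0"
    using \<open>r > 0\<close> k by (cases k) auto
  have "inj_on (\<lambda>t. t ^ d) (S - {0})"
  proof (rule inj_onI)
    fix x y
    assume "x \<in> S - {0}" "y \<in> S - {0}" "x ^ d = y ^ d"
    then show "x = y"
      using inj_onD[OF inj, of x y] by (simp add: e' power_mult)
  qed
  moreover have "(\<lambda>t. t ^ d) ` (S - {0}) \<subseteq> {y. y ^ k = 1}"
    using unit by (auto simp flip: power_mult simp: k)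
  ultimately have "r \<le> card {y::'a. y ^ k = 1}"
    using card roots_of_unity_finite_card_le(1)[OF \<open>k > 0\<close>] card_inj_on_le by metis
  also have "\<dots> \<le> k"
    by (rule roots_of_unity_finite_card_le(2)[OF \<open>k > 0\<close>])
  finally have "d * k \<le> 1 * k"
    using k by simp
  then have "d = 1"
    using k \<open>r > 0\<close> \<open>k > 0\<close> by (simp add: Nat.le_eq_less_or_eq)
  then show ?thesis
    by (simp add: d_def coprime_iff_gcd_eq_1)
qed

lemma inj_on_power_subfield_Fq_iff:
  assumes card: "card (subfield_Fq q :: 'a::field set) = q" and "q \<ge> 2" and "e > 0"
  shows "inj_on (\<lambda>t. t ^ e) (subfield_Fq q :: 'a set) \<longleftrightarrow> coprime e (q - 1)"
proof -
  have unit: "t ^ (q - 1) = 1" if "t \<in> subfield_Fq q" "t \<noteq> 0" for t :: 'a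
  proof -
    have "t * t ^ (q - 1) = t * 1"
      using that \<open>q \<ge> 2\<close> by (simp flip: power_Suc)
    then show ?thesis
      using that(2) by simp
  qed
  have "card (subfield_Fq q - {0 :: 'a}) = q - 1"
    using card \<open>q \<ge> 2\<close> by (simp add: card_Diff_singleton_if card_ge_0_finite)
  moreover have "q - 1 > 0"
    using \<open>q \<ge> 2\<close> by simp
  ultimately show ?thesis
    using unit \<open>e > 0\<close> coprime_if_inj_on_power[of _ "q - 1"] inj_on_power_if_coprime[of _ "q - 1"]
    by blast
qed

lemma inj_trace_pair:
  fixes a :: "'a::field"
  assumes add: "\<And>x y::'a. (x + y) ^ q = x ^ q + y ^ q" and "q > 0" and "a ^ q \<noteq> a"
  shows "inj (\<lambda>x. (x + x ^ q, a * x + (a * x) ^ q))"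
proof (rule injI)
  fix x y :: 'a
  assume "(x + x ^ q, a * x + (a * x) ^ q) = (y + y ^ q, a * y + (a * y) ^ q)"
  then have eq1: "x + x ^ q = y + y ^ q" and eq2: "a * x + a ^ q * x ^ q = a * y + a ^ q * y ^ q"
    by (simp_all add: power_mult_distrib)
  have diff: "(x - y) ^ q = x ^ q - y ^ q"
    using add[of x "- y"] power_uminus_if_power_add[OF add \<open>q > 0\<close>, of y] by simp
  have "(a ^ q - a) * (x - y) ^ q = (a * x + a ^ q * x ^ q) - (a * y + a ^ q * y ^ q) - a * ((x + x ^ q) - (y + y ^ q))"
    by (simp add: diff algebra_simps)
  then have "(a ^ q - a) * (x - y) ^ q = 0"
    using eq1 eq2 by simp
  then show "x = y"
    using \<open>a ^ q \<noteq> a\<close> by simp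
qed

lemma trace_pair_in_subfield_Fq:
  fixes a x :: "'a::{field,finite}"
  assumes "prime p" and "q = p ^ k" and "card (UNIV :: 'a set) = q ^ 2"
  shows "(x + x ^ q, a * x + (a * x) ^ q) \<in> subfield_Fq q \<times> subfield_Fq q"
  using trace_in_subfield_Fq quadratic_field_frobenius[OF assms] by blast

lemma card_subfield_Fq:
  assumes "prime p" and "k > 0" and "q = p ^ k" and card: "card (UNIV :: 'a::{field,finite} set) = q ^ 2"
  shows "card (subfield_Fq q :: 'a set) = q"
proof -
  let ?F = "subfield_Fq q :: 'a set"
  have "q \<ge> 2"
    using assms prime_power_ge_2 by blast
  then have le: "card ?F \<le> q"
    by (rule card_subfield_Fq_le)
  also have "\<dots> < q ^ 2"
    using \<open>q \<ge> 2\<close> by (simp add: power2_eq_square)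
  finally have "?F \<noteq> UNIV"
    using card by auto
  then obtain a :: 'a where "a \<notin> ?F"
    by blast
  have "q ^ 2 \<le> card (?F \<times> ?F)"
    unfolding card[symmetric]
  proof (rule card_inj_on_le)
    show "inj_on (\<lambda>x. (x + x ^ q, a * x + (a * x) ^ q)) UNIV"
      using inj_trace_pair[OF quadratic_field_frobenius(1)[OF assms(1,3,4)]] \<open>q \<ge> 2\<close> \<open>a \<notin> ?F\<close>
      by simp
  qed (use trace_pair_in_subfield_Fq[OF assms(1,3,4)] in auto)
  then have ge: "q * q \<le> card ?F * card ?F"
    by (simp add: card_cartesian_product power2_eq_square)
  show ?thesis
  proof (rule ccontr)
    assume "card ?F \<noteq> q"
    then have "card ?F * card ?F < q * q"
      using le by (intro mult_strict_mono) auto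
    then show False
      using ge by simp
  qed
qed

lemma bij_betw_trace_pair:
  fixes a :: "'a::{field,finite}"
  assumes "prime p" and "k > 0" and "q = p ^ k" and card: "card (UNIV :: 'a set) = q ^ 2"
    and "a \<notin> subfield_Fq q"
  shows "bij_betw (\<lambda>x. (x + x ^ q, a * x + (a * x) ^ q)) UNIV (subfield_Fq q \<times> subfield_Fq q)"
proof -
  let ?\<Phi> = "\<lambda>x::'a. (x + x ^ q, a * x + (a * x) ^ q)"
  have "q \<ge> 2"
    using prime_power_ge_2[OF assms(1,2)] assms(3) by simp
  then have "q > 0"
    by simp
  have inj: "inj ?\<Phi>"
    using inj_trace_pair[OF quadratic_field_frobenius(1)[OF assms(1,3,4)] \<open>q > 0\<close>] assms(5)
    by simp
  have "card (range ?\<Phi>) = card (subfield_Fq q \<times> subfield_Fq q :: ('a \<times> 'a) set)"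
    using card_image[OF inj] card card_subfield_Fq[OF assms(1-4)]
    by (simp add: card_cartesian_product power2_eq_square)
  then have "range ?\<Phi> = subfield_Fq q \<times> subfield_Fq q"
    using trace_pair_in_subfield_Fq[OF assms(1,3,4)] by (intro card_subset_eq) auto
  then show ?thesis
    using inj by (simp add: bij_betw_def)
qed

lemma inj_on_power_sum_subfield_Fq:
  fixes c :: "'a::field"
  assumes add: "\<And>x y::'a. (x + y) ^ q = x ^ q + y ^ q"
    and "c ^ q \<noteq> c"
    and inj_m: "inj_on (\<lambda>s. s ^ m) (subfield_Fq q :: 'a set)"
    and inj_n: "inj_on (\<lambda>t. t ^ n) (subfield_Fq q :: 'a set)"
  shows "inj_on (\<lambda>(s, t). s ^ m + c * t ^ n) (subfield_Fq q \<times> subfield_Fq q)"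
proof (rule inj_onI, clarify)
  fix s1 t1 s2 t2 :: 'a
  assume in_F: "s1 \<in> subfield_Fq q" "t1 \<in> subfield_Fq q" "s2 \<in> subfield_Fq q" "t2 \<in> subfield_Fq q"
    and eq: "s1 ^ m + c * t1 ^ n = s2 ^ m + c * t2 ^ n"
  have conj: "(s ^ m + c * t ^ n) ^ q = s ^ m + c ^ q * t ^ n"
    if "s \<in> subfield_Fq q" "t \<in> subfield_Fq q" for s t
    using that power_in_subfield_Fq[of s q m] power_in_subfield_Fq[of t q n]
    by (simp add: add power_mult_distrib)
  have eq_conj: "s1 ^ m + c ^ q * t1 ^ n = s2 ^ m + c ^ q * t2 ^ n"
    using conj[of s1 t1] conj[of s2 t2] eq in_F by simp
  have "(c - c ^ q) * (t1 ^ n - t2 ^ n)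
      = (s1 ^ m + c * t1 ^ n) - (s2 ^ m + c * t2 ^ n)
        - ((s1 ^ m + c ^ q * t1 ^ n) - (s2 ^ m + c ^ q * t2 ^ n))"
    by (simp add: algebra_simps)
  then have "(c - c ^ q) * (t1 ^ n - t2 ^ n) = 0"
    using eq eq_conj by simp
  then have "t1 ^ n = t2 ^ n"
    using \<open>c ^ q \<noteq> c\<close> by simp
  then have "t1 = t2"
    using inj_onD[OF inj_n, of t1 t2] in_F by simp
  moreover from this have "s1 ^ m = s2 ^ m"
    using eq by simp
  then have "s1 = s2"
    using inj_onD[OF inj_m, of s1 s2] in_F by simp
  ultimately show "s1 = s2 \<and> t1 = t2"
    by simp
qed

lemma bij_betw_power_sum_subfield_Fq_iff:
  fixes c :: "'a::{field,finite}"
  assumes "prime p" and "k > 0" and "q = p ^ k" and card: "card (UNIV :: 'a set) = q ^ 2"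
    and "m > 0" and "n > 0"
  shows "bij_betw (\<lambda>(s, t). s ^ m + c * t ^ n) (subfield_Fq q \<times> subfield_Fq q) UNIV
    \<longleftrightarrow> c \<notin> subfield_Fq q \<and> inj_on (\<lambda>s. s ^ m) (subfield_Fq q :: 'a set)
        \<and> inj_on (\<lambda>t. t ^ n) (subfield_Fq q :: 'a set)"
  (is "bij_betw ?g (?F \<times> ?F) UNIV \<longleftrightarrow> _")
proof
  have "q \<ge> 2"
    using prime_power_ge_2[OF assms(1,2)] assms(3) by simp
  have add: "(x + y) ^ q = x ^ q + y ^ q" for x y :: 'a
    by (rule quadratic_field_frobenius(1)[OF assms(1,3,4)])
  have card_F: "card ?F = q"
    by (rule card_subfield_Fq[OF assms(1-4)])
  {
    assume bij: "bij_betw ?g (?F \<times> ?F) UNIV"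
    then have inj: "inj_on ?g (?F \<times> ?F)" and onto: "?g ` (?F \<times> ?F) = UNIV"
      by (simp_all add: bij_betw_def)
    have "0 \<in> ?F"
      using \<open>q \<ge> 2\<close> by simp
    have "c \<notin> ?F"
    proof
      assume "c \<in> ?F"
      then have "?g ` (?F \<times> ?F) \<subseteq> ?F"
        by (auto intro!: add_in_subfield_Fq[OF add] mult_in_subfield_Fq power_in_subfield_Fq
            simp del: subfield_Fq_iff)
      moreover have "?F \<noteq> UNIV"
        using card card_F \<open>q \<ge> 2\<close> by (auto simp: power2_eq_square)
      ultimately show False
        using onto by blast
    qed
    moreover have "inj_on (\<lambda>s. s ^ m) ?F"
    proof (rule inj_onI)
      fix s1 s2 assume "s1 \<in> ?F" "s2 \<in> ?F" "s1 ^ m = s2 ^ m"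
      then show "s1 = s2"
        using inj_onD[OF inj, of "(s1, 0)" "(s2, 0)"] \<open>0 \<in> ?F\<close> \<open>n > 0\<close> by simp
    qed
    moreover have "inj_on (\<lambda>t. t ^ n) ?F"
    proof (rule inj_onI)
      fix t1 t2 assume "t1 \<in> ?F" "t2 \<in> ?F" "t1 ^ n = t2 ^ n"
      then show "t1 = t2"
        using inj_onD[OF inj, of "(0, t1)" "(0, t2)"] \<open>0 \<in> ?F\<close> \<open>m > 0\<close> by simp
    qed
    ultimately show "c \<notin> ?F \<and> inj_on (\<lambda>s. s ^ m) ?F \<and> inj_on (\<lambda>t. t ^ n) ?F"
      by blast
  }
  {
    assume "c \<notin> ?F \<and> inj_on (\<lambda>s. s ^ m) ?F \<and> inj_on (\<lambda>t. t ^ n) ?F"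
    then have inj: "inj_on ?g (?F \<times> ?F)"
      using inj_on_power_sum_subfield_Fq[OF add] by simp
    then have "card (?g ` (?F \<times> ?F)) = card (UNIV :: 'a set)"
      using card_image[OF inj] card card_F by (simp add: card_cartesian_product power2_eq_square)
    then show "bij_betw ?g (?F \<times> ?F) UNIV"
      using inj by (simp add: bij_betw_def card_subset_eq)
  }
qed

lemma cube_root_of_unity_power_mod:
  fixes \<omega> :: "'a::monoid_mult"
  assumes "\<omega> ^ 3 = 1"
  shows "\<omega> ^ j = \<omega> ^ (j mod 3)"
proof -
  have "\<omega> ^ j = (\<omega> ^ 3) ^ (j div 3) * \<omega> ^ (j mod 3)"
    by (simp flip: power_mult power_add)
  then show ?thesis
    using assms by simp
qed

lemma cube_root_of_unity_power_eq_one_iff: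
  fixes \<omega> :: "'a::monoid_mult"
  assumes "\<omega> ^ 3 = 1" and "\<omega> \<noteq> 1"
  shows "\<omega> ^ j = 1 \<longleftrightarrow> 3 dvd j"
proof -
  have "\<omega> ^ 2 \<noteq> 1"
  proof
    assume "\<omega> ^ 2 = 1"
    then have "\<omega> ^ 3 = \<omega>"
      by (simp add: power_numeral_reduce)
    then show False
      using assms by simp
  qed
  moreover have "j mod 3 = 0 \<or> j mod 3 = 1 \<or> j mod 3 = 2"
    by presburger
  ultimately show ?thesis
    using assms cube_root_of_unity_power_mod[OF assms(1), of j] by (auto simp: dvd_eq_mod_eq_0)
qed

lemma cube_root_of_unity_power_in_subfield_Fq_iff:
  fixes \<omega> :: "'a::field"
  assumes "\<omega> ^ 3 = 1" and "\<omega> \<noteq> 1" and "\<omega> ^ q = \<omega> ^ 2"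
  shows "\<omega> ^ j \<in> subfield_Fq q \<longleftrightarrow> 3 dvd j"
proof -
  have "(\<omega> ^ j) ^ q = (\<omega> ^ q) ^ j"
    by (metis power_mult mult.commute)
  also have "\<dots> = (\<omega> ^ j) ^ 2"
    by (metis assms(3) power_mult mult.commute)
  finally have "(\<omega> ^ j) ^ q = \<omega> ^ j * \<omega> ^ j"
    by (simp add: power2_eq_square)
  moreover have "\<omega> \<noteq> 0"
    using assms(1) by auto
  ultimately have "\<omega> ^ j \<in> subfield_Fq q \<longleftrightarrow> \<omega> ^ j = 1"
    by simp
  then show ?thesis
    using cube_root_of_unity_power_eq_one_iff[OF assms(1,2)] by simp
qed

lemma signed_cube_root_mult_in_subfield_Fq_iff:
  fixes \<omega> \<epsilon> :: "'a::field"
  assumes add: "\<And>a b::'a. (a + b) ^ q = a ^ q + b ^ q" and "q > 0"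
    and "\<omega> ^ 3 = 1" and "\<omega> \<noteq> 1" and "\<omega> ^ q = \<omega> ^ 2"
    and "\<epsilon> = \<omega> ^ i \<or> \<epsilon> = - (\<omega> ^ i)"
  shows "\<epsilon> * \<omega> ^ j \<in> subfield_Fq q \<longleftrightarrow> 3 dvd j + i"
proof -
  have "\<epsilon> * \<omega> ^ j = \<omega> ^ (j + i) \<or> \<epsilon> * \<omega> ^ j = - (\<omega> ^ (j + i))"
    using assms(6) by (auto simp: power_add mult.commute)
  then show ?thesis
    using uminus_in_subfield_Fq_iff[OF add \<open>q > 0\<close>]
      cube_root_of_unity_power_in_subfield_Fq_iff[OF assms(3-5)]
    by (metis (no_types, lifting))
qed

lemma bij_trace_binomial_iff:
  fixes \<omega> \<epsilon> :: "'a::{field,finite}"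
  assumes "prime p" and "k > 0" and "q = p ^ k" and "card (UNIV :: 'a set) = q ^ 2"
    and "m > 0" and "n > 0"
    and "\<omega> ^ 3 = 1" and "\<omega> \<noteq> 1" and "\<omega> ^ q = \<omega> ^ 2"
  shows "bij (\<lambda>x. (x + x ^ q) ^ m + \<epsilon> * (x + \<omega> * x ^ q) ^ n)
    \<longleftrightarrow> coprime (m * n) (q - 1) \<and> \<epsilon> * \<omega> ^ (2 * n) \<notin> subfield_Fq q"
proof -
  let ?F = "subfield_Fq q :: 'a set"
  let ?\<Phi> = "\<lambda>x::'a. (x + x ^ q, \<omega> * x + (\<omega> * x) ^ q)"
  let ?g = "\<lambda>(s, t). s ^ m + \<epsilon> * \<omega> ^ (2 * n) * t ^ n"
  have "q \<ge> 2"
    using prime_power_ge_2[OF assms(1,2)] assms(3) by simp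
  have "\<omega> \<notin> ?F"
    using cube_root_of_unity_power_in_subfield_Fq_iff[OF assms(7-9), of 1] by simp
  then have \<Phi>: "bij_betw ?\<Phi> UNIV (?F \<times> ?F)"
    by (rule bij_betw_trace_pair[OF assms(1-4)])
  have "x + \<omega> * x ^ q = \<omega> ^ 2 * (\<omega> * x + (\<omega> * x) ^ q)" for x :: 'a
  proof -
    have "\<omega> ^ 2 * (\<omega> * x + (\<omega> * x) ^ q) = \<omega> ^ 3 * x + \<omega> ^ 3 * \<omega> * x ^ q"
      by (simp add: assms(9) power_mult_distrib algebra_simps power2_eq_square power3_eq_cube)
    then show ?thesis
      using assms(7) by simp
  qed
  then have "(\<lambda>x. (x + x ^ q) ^ m + \<epsilon> * (x + \<omega> * x ^ q) ^ n) = ?g \<circ> ?\<Phi>"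
    by (simp add: fun_eq_iff power_mult_distrib mult.assoc flip: power_mult)
  then have "bij (\<lambda>x. (x + x ^ q) ^ m + \<epsilon> * (x + \<omega> * x ^ q) ^ n) \<longleftrightarrow> bij_betw ?g (?F \<times> ?F) UNIV"
    using bij_betw_comp_iff[OF \<Phi>, of ?g UNIV] by (simp only: bij_def)
  also have "\<dots> \<longleftrightarrow> \<epsilon> * \<omega> ^ (2 * n) \<notin> ?F \<and> inj_on (\<lambda>s. s ^ m) ?F \<and> inj_on (\<lambda>t. t ^ n) ?F"
    by (rule bij_betw_power_sum_subfield_Fq_iff[OF assms(1-6)])
  also have "\<dots> \<longleftrightarrow> \<epsilon> * \<omega> ^ (2 * n) \<notin> ?F \<and> coprime (m * n) (q - 1)"
    using inj_on_power_subfield_Fq_iff[OF card_subfield_Fq[OF assms(1-4)] \<open>q \<ge> 2\<close>] assms(5,6)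
    by simp
  finally show ?thesis
    by blast
qed

theorem proposition3p4:
  fixes q m n :: nat and \<omega> \<epsilon> :: "'a::{field,finite}"
  assumes q_pp: "\<exists>p k. prime p \<and> k > 0 \<and> q = p ^ k"
    and q_mod: "q mod 3 = 2"
    and card: "card (UNIV :: 'a set) = q ^ 2"
    and m_pos: "m > 0" and n_pos: "n > 0"
    and \<omega>_ord: "\<omega> ^ 3 = 1" "\<omega> \<noteq> 1"
    and \<epsilon>_cases: "\<epsilon> \<in> (subfield_Fq q - {0}) \<union> {\<omega>, -\<omega>, \<omega>^2, -(\<omega>^2)}"
  defines "f \<equiv> (\<lambda>x::'a. (x + x ^ q) ^ m + \<epsilon> * (x + \<omega> * x ^ q) ^ n)"
  shows "(\<epsilon> \<in> subfield_Fq q - {0} \<longrightarrow>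
            (bij f \<longleftrightarrow> coprime (m * n) (q - 1) \<and> \<not> 3 dvd n))
       \<and> ((\<epsilon> = \<omega> \<or> \<epsilon> = -\<omega>) \<longrightarrow>
            (bij f \<longleftrightarrow> coprime (m * n) (q - 1) \<and> n mod 3 \<noteq> 1))
       \<and> ((\<epsilon> = \<omega>^2 \<or> \<epsilon> = -(\<omega>^2)) \<longrightarrow>
            (bij f \<longleftrightarrow> coprime (m * n) (q - 1) \<and> n mod 3 \<noteq> 2))"
proof -
  obtain p k where pk: "prime p" "k > 0" "q = p ^ k"
    using q_pp by blast
  have "q > 0"
    using prime_power_ge_2[OF pk(1,2)] unfolding pk(3) by linarith
  have \<omega>_q: "\<omega> ^ q = \<omega> ^ 2"
    using cube_root_of_unity_power_mod[OF \<omega>_ord(1), of q] q_mod by simp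
  let ?c = "\<epsilon> * \<omega> ^ (2 * n)" and ?F = "subfield_Fq q :: 'a set"
  have "bij f \<longleftrightarrow> coprime (m * n) (q - 1) \<and> ?c \<notin> ?F"
    unfolding f_def by (rule bij_trace_binomial_iff[OF pk card m_pos n_pos \<omega>_ord \<omega>_q])
  moreover have "?c \<in> ?F \<longleftrightarrow> \<omega> ^ (2 * n) \<in> ?F" if "\<epsilon> \<in> ?F - {0}"
    using that by (intro mult_in_subfield_Fq_iff) auto
  moreover have "?c \<in> ?F \<longleftrightarrow> 3 dvd 2 * n + i" if "\<epsilon> = \<omega> ^ i \<or> \<epsilon> = - (\<omega> ^ i)" for i
    using signed_cube_root_mult_in_subfield_Fq_iff
      [OF quadratic_field_frobenius(1)[OF pk(1,3) card] \<open>q > 0\<close> \<omega>_ord \<omega>_q that] .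
  moreover have "\<omega> ^ (2 * n) \<in> ?F \<longleftrightarrow> 3 dvd 2 * n"
    by (rule cube_root_of_unity_power_in_subfield_Fq_iff[OF \<omega>_ord \<omega>_q])
  moreover have "3 dvd 2 * n \<longleftrightarrow> 3 dvd n" and "3 dvd 2 * n + 1 \<longleftrightarrow> n mod 3 = 1"
    and "3 dvd 2 * n + 2 \<longleftrightarrow> n mod 3 = 2"
    by presburger+
  ultimately show ?thesis
    by (metis power_one_right)
qed

end
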